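(* Let $B\ge 2$ and $\eta\in\mathbb{N}$. If $\gamma_B(\eta+1)\geq B^2$, then $\gamma_B(\eta+1)>\gamma_B(\eta)$.
   Context: Fix an integer base $B \geq 2$. Every integer $x>0$ is written uniquely as $x=\sum_{i=0}^{L(x)-1} x_i B^i$ with digits $0 \le x_i \le B-1$ and $x_{L(x)-1}\neq 0$. Define $\mathcal{H}_B(x)=\sum_{i=0}^{L(x)-1} x_i^2$, $\mathcal{H}_B(0)=0$, $\mathcal{H}_B^0(x)=x$, $\mathcal{H}_B^{n}=\mathcal{H}_B\circ\mathcal{H}_B^{n-1}$. A positive integer $x$ is happy if $\mathcal{H}_B^n(x)=1$ for some $n\in\mathbb{N}$; its height is $\eta_B(x)=\min\{\alpha\in\mathbb{N}:\mathcal{H}_B^\alpha(x)=1\}$. For $n\in\mathbb{N}$, $\gamma_B(n)$ denotes the smallest happy number $x\ge 1$ with $\eta_B(x)=n$. *)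

theory Defs
  imports Main
begin

text \<open>Base-B digits of x, least significant first (empty for x = 0).
  The guard B < 2 only serves termination; the paper always has B \<ge> 2.\<close>
function base_digits :: "nat \<Rightarrow> nat \<Rightarrow> nat list" where
  "base_digits B x = (if B < 2 \<or> x = 0 then [] else x mod B # base_digits B (x div B))"
  by auto
termination
  by (relation "measure snd") auto

declare base_digits.simps[simp del]

definition happyH :: "nat \<Rightarrow> nat \<Rightarrow> nat" where
  "happyH B x = sum_list (map (\<lambda>d. d ^ 2) (base_digits B x))"

definition happy :: "nat \<Rightarrow> nat \<Rightarrow> bool" where
  "happy B x \<longleftrightarrow> x > 0 \<and> (\<exists>n. (happyH B ^^ n) x = 1)"

definition happy_height :: "nat \<Rightarrow> nat \<Rightarrow> nat" where
  "happy_height B x = (LEAST a. (happyH B ^^ a) x = 1)"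

definition happy_gamma :: "nat \<Rightarrow> nat \<Rightarrow> nat" where
  "happy_gamma B n = (LEAST x. x \<ge> 1 \<and> happy B x \<and> happy_height B x = n)"

end

theory Submission
  imports Defs
begin

text \<open>Every happy x \<noteq> 1 has a happy image H x of height one less, so gamma(\<eta>+1) maps to a happy
  number of height \<eta>, which bounds gamma(\<eta>) from above. Since every digit is at most B - 1,
  H x \<le> (B - 1) x holds for all x, with slack (B - 1)^2 once x has two digits; from three digits
  on this makes H strictly decreasing. Gamma is well defined because B \<cdot> (1 + B + \<dots> + B^(y-1))
  maps to y, so every height is attained.\<close>

lemma happyH_0 [simp]: "happyH B 0 = 0"
  by (simp add: happyH_def base_digits.simps)

lemma happyH_eq:
  assumes "B \<ge> 2"
  shows "happyH B x = (x mod B)^2 + happyH B (x div B)"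
  using assms by (cases "x = 0") (simp_all add: happyH_def base_digits.simps[of B x])

lemma mod_le_pred:
  fixes B x :: nat
  assumes "B > 0"
  shows "x mod B \<le> B - 1"
  using assms by (simp add: less_Suc_eq_le[symmetric])

lemma digit_square_le:
  fixes B x :: nat
  assumes "B \<ge> 2"
  shows "(x mod B)^2 \<le> (B - 1) * (x mod B)"
  using mod_le_pred[of B x] assms by (simp add: power2_eq_square)

lemma happyH_le:
  assumes "B \<ge> 2"
  shows "happyH B x \<le> (B - 1) * x"
proof (induction x rule: less_induct)
  case (less x)
  show ?case
  proof (cases "x = 0")
    case False
    have "happyH B x \<le> (B - 1) * (x mod B) + (B - 1) * (x div B)"
      using happyH_eq[OF assms, of x] digit_square_le[OF assms, of x]
        less[of "x div B"] False assms by simp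
    also have "\<dots> \<le> (B - 1) * x"
    proof -
      have "x div B \<le> x div B * B"
        using assms by simp
      then have "x mod B + x div B \<le> x"
        using div_mult_mod_eq[of x B] by linarith
      then show ?thesis
        by (metis add_mult_distrib2 mult_le_mono2)
    qed
    finally show ?thesis .
  qed simp
qed

lemma happyH_le_two_digits:
  assumes "B \<ge> 2" and "x \<ge> B"
  shows "happyH B x + (B - 1)^2 \<le> (B - 1) * x"
proof -
  define q where "q = x div B"
  have q: "q \<ge> 1"
    using assms unfolding q_def by (simp add: Suc_le_eq div_greater_zero_iff)
  have "happyH B x \<le> (B - 1) * (x mod B) + (B - 1) * q"
    using happyH_eq[OF assms(1), of x] digit_square_le[OF assms(1), of x]
      happyH_le[OF assms(1), of q] unfolding q_def by linarith
  moreover have "(B - 1)^2 \<le> (B - 1) * (B - 1) * q"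
    using q by (simp add: power2_eq_square)
  moreover have "(B - 1) * x = (B - 1) * (x mod B) + (B - 1) * q + (B - 1) * (B - 1) * q"
  proof -
    have "B * q = q + (B - 1) * q"
      using assms(1) by (simp add: mult_eq_if)
    then show ?thesis
      using mod_div_mult_eq[of x B] unfolding q_def[symmetric]
      by (metis add_mult_distrib2 mult.assoc mult.commute add.commute add.assoc)
  qed
  ultimately show ?thesis
    by linarith
qed

lemma happyH_less:
  assumes "B \<ge> 2" and "x \<ge> B^2"
  shows "happyH B x < x"
proof -
  define q where "q = x div B"
  have "q \<ge> B"
    using div_le_mono[OF assms(2), of B] assms(1) unfolding q_def by (simp add: power2_eq_square)
  have "(x mod B)^2 \<le> (B - 1)^2"
    using mod_le_pred[of B x] assms(1) by (simp add: power_mono)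
  then have "happyH B x \<le> (B - 1)^2 + happyH B q"
    using happyH_eq[OF assms(1), of x] unfolding q_def by simp
  also have "\<dots> \<le> (B - 1) * q"
    using happyH_le_two_digits[OF assms(1) \<open>q \<ge> B\<close>] by simp
  also have "\<dots> < B * q"
    using \<open>q \<ge> B\<close> assms(1) by simp
  also have "\<dots> \<le> x"
    unfolding q_def by simp
  finally show ?thesis .
qed

lemma happyH_mult_base:
  assumes "B \<ge> 2"
  shows "happyH B (B * x) = happyH B x"
  using happyH_eq[OF assms, of "B * x"] assms by simp

definition repunit :: "nat \<Rightarrow> nat \<Rightarrow> nat" where
  "repunit B k = (\<Sum>i<k. B ^ i)"

lemma repunit_Suc: "repunit B (Suc k) = B * repunit B k + 1"
  unfolding repunit_def
  by (simp add: sum_distrib_left lessThan_Suc_eq_insert_0 sum.reindex del: sum.lessThan_Suc)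

lemma happyH_repunit:
  assumes "B \<ge> 2"
  shows "happyH B (repunit B k) = k"
proof (induction k)
  case 0
  then show ?case by (simp add: repunit_def)
next
  case (Suc k)
  have "(B * repunit B k + 1) mod B = 1"
    using assms by (subst mod_mult_self4) simp
  moreover have "(B * repunit B k + 1) div B = repunit B k"
    using assms by (subst div_mult_self4) simp_all
  ultimately show ?case
    using happyH_eq[OF assms, of "B * repunit B k + 1"] Suc by (simp add: repunit_Suc)
qed

lemma repunit_pos: "k > 0 \<Longrightarrow> repunit B k > 0"
  by (cases k) (simp_all add: repunit_Suc)

lemma funpow_happyH_0: "(happyH B ^^ n) 0 = 0"
  by (induction n) simp_all

lemma happy_height_happyH:
  assumes "happy B x" and "x \<noteq> 1"
  shows "happy_height B x = Suc (happy_height B (happyH B x))"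
proof -
  obtain n where "(happyH B ^^ n) x = 1"
    using assms(1) unfolding happy_def by blast
  then have "happy_height B x = Suc (LEAST a. (happyH B ^^ Suc a) x = 1)"
    unfolding happy_height_def using assms(2) by (intro Least_Suc) auto
  then show ?thesis
    unfolding happy_height_def by (simp add: funpow_Suc_right del: funpow.simps)
qed

lemma happy_happyH:
  assumes "happy B x" and "x \<noteq> 1"
  shows "happy B (happyH B x)"
proof -
  obtain n where n: "(happyH B ^^ n) x = 1"
    using assms(1) unfolding happy_def by blast
  with assms(2) obtain m where "n = Suc m"
    by (cases n) auto
  with n have m: "(happyH B ^^ m) (happyH B x) = 1"
    by (simp add: funpow_Suc_right del: funpow.simps)
  then have "happyH B x \<noteq> 0"
    by (metis funpow_happyH_0 zero_neq_one)
  with m show ?thesis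
    unfolding happy_def by blast
qed

lemma happy_preimage:
  assumes "happy B (happyH B x)" and "x > 1"
  shows "happy B x"
proof -
  obtain n where "(happyH B ^^ n) (happyH B x) = 1"
    using assms(1) unfolding happy_def by blast
  then have "(happyH B ^^ Suc n) x = 1"
    by (simp add: funpow_Suc_right del: funpow.simps)
  with assms(2) show ?thesis
    unfolding happy_def by (auto simp del: funpow.simps)
qed

lemma happy_height_exists:
  assumes "B \<ge> 2"
  shows "\<exists>x. happy B x \<and> happy_height B x = n"
proof (induction n)
  case 0
  have "happy B 1"
    unfolding happy_def by (auto intro: exI[of _ 0])
  moreover have "happy_height B 1 = 0"
    unfolding happy_height_def by simp
  ultimately show ?case by blast
next
  case (Suc n)
  then obtain y where y: "happy B y" "happy_height B y = n"
    by blast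
  define x where "x = B * repunit B y"
  have Hx: "happyH B x = y"
    unfolding x_def using assms by (simp add: happyH_mult_base happyH_repunit)
  have "repunit B y > 0"
    using y(1) unfolding happy_def by (simp add: repunit_pos)
  then have "B \<le> x"
    unfolding x_def by simp
  with assms have "x > 1"
    by linarith
  then have "happy B x"
    using happy_preimage[of B x] y(1) Hx by simp
  moreover have "happy_height B x = Suc n"
    using happy_height_happyH[OF \<open>happy B x\<close>] \<open>x > 1\<close> Hx y(2) by simp
  ultimately show ?case by blast
qed

lemma happy_gamma:
  assumes "B \<ge> 2"
  shows "happy B (happy_gamma B n)" and "happy_height B (happy_gamma B n) = n"
proof -
  obtain x where "happy B x" "happy_height B x = n"
    using happy_height_exists[OF assms] by blast
  then have "x \<ge> 1 \<and> happy B x \<and> happy_height B x = n"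
    unfolding happy_def by simp
  then have "happy_gamma B n \<ge> 1 \<and> happy B (happy_gamma B n) \<and> happy_height B (happy_gamma B n) = n"
    unfolding happy_gamma_def by (rule LeastI)
  then show "happy B (happy_gamma B n)" and "happy_height B (happy_gamma B n) = n"
    by simp_all
qed

lemma happy_gamma_le:
  assumes "happy B x" and "happy_height B x = n"
  shows "happy_gamma B n \<le> x"
  unfolding happy_gamma_def using assms by (intro Least_le) (simp add: happy_def)

theorem lemma2p2:
  fixes B \<eta> :: nat
  assumes "B \<ge> 2"
    and "happy_gamma B (\<eta> + 1) \<ge> B ^ 2"
  shows "happy_gamma B (\<eta> + 1) > happy_gamma B \<eta>"
proof -
  define x where "x = happy_gamma B (\<eta> + 1)"
  have "B ^ 2 > 1"
    using assms(1) one_less_power[of B 2] by simp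
  with assms(2) have "x \<noteq> 1"
    unfolding x_def by linarith
  have "happy B x" and "happy_height B x = \<eta> + 1"
    unfolding x_def using happy_gamma[OF assms(1)] by simp_all
  then have "happy B (happyH B x)" and "happy_height B (happyH B x) = \<eta>"
    using happy_happyH happy_height_happyH \<open>x \<noteq> 1\<close> by auto
  then have "happy_gamma B \<eta> \<le> happyH B x"
    by (rule happy_gamma_le)
  also have "\<dots> < x"
    using happyH_less[OF assms(1)] assms(2) unfolding x_def by simp
  finally show ?thesis
    unfolding x_def .
qed

end
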